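(* Let $\mathcal{A}$ be a fully probabilistic finite automaton, $\varphi \subseteq CRun(\mathcal{A})$ a predicate and $\mathcal{O}: CRun(\mathcal{A}) \to Obs$ a surjective observation function. Then: (1) $0 \leq \mathrm{PO}^A_\ell(\mathcal{A},\varphi,\mathcal{O}) \leq 1$ and $0 \leq \mathrm{PO}^S_\ell(\mathcal{A},\varphi,\mathcal{O}) \leq 1$. (2) $\mathrm{PO}^A_\ell(\mathcal{A},\varphi,\mathcal{O}) = 0$ if and only if $\varphi$ is opaque on $\mathit{unProb}(\mathcal{A})$ with respect to $\mathit{unProb}(\mathcal{O})$; and $\mathrm{PO}^S_\ell(\mathcal{A},\varphi,\mathcal{O}) = 0$ if and only if $\varphi$ is symmetrically opaque on $\mathit{unProb}(\mathcal{A})$ with respect to $\mathit{unProb}(\mathcal{O})$. (3) $\mathrm{PO}^A_\ell(\mathcal{A},\varphi,\mathcal{O}) = 1$ if and only if $\varphi = CRun(\mathcal{A})$; and $\mathrm{PO}^S_\ell(\mathcal{A},\varphi,\mathcal{O}) = 1$ if and only if $H(\mathbf{1}_{\varphi} \mid \mathcal{O}) = 0$.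
   Context: A fully probabilistic finite automaton (FPFA) is a tuple $\langle \Sigma, Q, \Delta, q_0\rangle$ with $\Sigma$ a finite alphabet, $Q$ a finite set of states, $q_0$ the initial state, and $\Delta: Q \to ((\Sigma\times Q)\uplus\{\mathrm{stop}\} \to [0,1])$ where $\mathrm{stop}$ is a special termination action, such that for each $q$, $\Delta(q)$ is a probability distribution and from every state there is a positive-probability path to a final state (a state $q$ with $\Delta(q)(\mathrm{stop})>0$). A run is a finite sequence $q_0 \xrightarrow{a_1} q_1 \cdots \xrightarrow{a_n} q_n$ with $\Delta(q_{i-1})(a_i,q_i)>0$; a complete run is $\rho\cdot\mathrm{stop}$ with $\Delta(q_n)(\mathrm{stop})>0$; $CRun(\mathcal{A})$ is the set of complete runs from $q_0$. The probability of a complete run is defined by $\mathbf{P}(q\,\mathrm{stop}) = \Delta(q)(\mathrm{stop})$ and $\mathbf{P}(q\xrightarrow{a}\rho) = \Delta(q)(a,r)\cdot\mathbf{P}(\rho)$ with $r$ the first state of $\rho$; this is a distribution on $CRun(\mathcal{A})$. $\mathbf{1}_\varphi$ and $\mathcal{O}$ are viewed as random variables on $CRun(\mathcal{A})$. Liberal probabilistic opacity: $\mathrm{PO}^A_\ell(\mathcal{A},\varphi,\mathcal{O}) = \sum_{o\in Obs,\ \mathcal{O}^{-1}(o)\subseteq\varphi} \mathbf{P}(\mathcal{O}=o)$; liberal probabilistic symmetrical opacity: $\mathrm{PO}^S_\ell(\mathcal{A},\varphi,\mathcal{O}) = \mathrm{PO}^A_\ell(\mathcal{A},\varphi,\mathcal{O})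 + \mathrm{PO}^A_\ell(\mathcal{A},\overline\varphi,\mathcal{O})$. $\mathit{unProb}(\mathcal{A})$ is the nondeterministic finite automaton with transitions $\{(q,a,r) : \Delta(q)(a,r)>0\}$, initial state $q_0$, and final states $\{q : \Delta(q)(\mathrm{stop})>0\}$; $\mathit{unProb}(\mathcal{O})(q_0\xrightarrow{a_1}\cdots q_n) = \mathcal{O}(q_0\xrightarrow{a_1}\cdots q_n\,\mathrm{stop})$. A predicate $\varphi$ is opaque for $\mathcal{O}$ if for every $o\in Obs$, $\mathcal{O}^{-1}(o)\not\subseteq\varphi$; it is symmetrically opaque if moreover $\mathcal{O}^{-1}(o)\not\subseteq\overline\varphi$ for every $o$. $H(\cdot\mid\cdot)$ is conditional Shannon entropy (base-2 logarithm). *)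

theory Defs
  imports "HOL-Probability.Probability_Mass_Function"
begin

text \<open>The transition function maps
each state to a probability distribution over (letter, successor) pairs
(Some (a, r)) and the special termination action stop (None).\<close>

type_synonym ('a, 's) fpfa_trans = "'s \<Rightarrow> ('a \<times> 's) option pmf"

text \<open>A run q0 -a1-> q1 ... -an-> qn is represented by its start state q0 and the
list [(a1,q1),...,(an,qn)].  A complete run q0 ... qn stop is represented by the
same list (the trailing stop being implicit).\<close>

fun last_st :: "'s \<Rightarrow> ('a \<times> 's) list \<Rightarrow> 's" where
  "last_st q [] = q"
| "last_st q ((a, r) # \<rho>) = last_st r \<rho>"

fun is_run :: "('a, 's) fpfa_trans \<Rightarrow> 's \<Rightarrow> ('a \<times> 's) list \<Rightarrow> bool" where
  "is_run \<Delta> q [] = True"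
| "is_run \<Delta> q ((a, r) # \<rho>) = (pmf (\<Delta> q) (Some (a, r)) > 0 \<and> is_run \<Delta> r \<rho>)"

definition is_final :: "('a, 's) fpfa_trans \<Rightarrow> 's \<Rightarrow> bool" where
  "is_final \<Delta> q \<longleftrightarrow> pmf (\<Delta> q) None > 0"

definition fpfa :: "('a::finite, 's::finite) fpfa_trans \<Rightarrow> bool" where
  "fpfa \<Delta> \<longleftrightarrow> (\<forall>q. \<exists>\<rho>. is_run \<Delta> q \<rho> \<and> is_final \<Delta> (last_st q \<rho>))"

definition CRun :: "('a, 's) fpfa_trans \<Rightarrow> 's \<Rightarrow> ('a \<times> 's) list set" where
  "CRun \<Delta> q0 = {\<rho>. is_run \<Delta> q0 \<rho> \<and> is_final \<Delta> (last_st q0 \<rho>)}"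

fun run_prob :: "('a, 's) fpfa_trans \<Rightarrow> 's \<Rightarrow> ('a \<times> 's) list \<Rightarrow> real" where
  "run_prob \<Delta> q [] = pmf (\<Delta> q) None"
| "run_prob \<Delta> q ((a, r) # \<rho>) = pmf (\<Delta> q) (Some (a, r)) * run_prob \<Delta> r \<rho>"

definition Prob :: "('a, 's) fpfa_trans \<Rightarrow> 's \<Rightarrow> ('a \<times> 's) list set \<Rightarrow> real" where
  "Prob \<Delta> q0 S = (\<Sum>\<^sub>\<infinity>\<rho>\<in>S \<inter> CRun \<Delta> q0. run_prob \<Delta> q0 \<rho>)"

definition preimg :: "('a, 's) fpfa_trans \<Rightarrow> 's \<Rightarrow> (('a \<times> 's) list \<Rightarrow> 'o) \<Rightarrow> 'o \<Rightarrow> ('a \<times> 's) list set" where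
  "preimg \<Delta> q0 Obf ob = {\<rho> \<in> CRun \<Delta> q0. Obf \<rho> = ob}"

definition PO_A :: "('a, 's) fpfa_trans \<Rightarrow> 's \<Rightarrow> ('a \<times> 's) list set \<Rightarrow>
    (('a \<times> 's) list \<Rightarrow> 'o) \<Rightarrow> 'o set \<Rightarrow> real" where
  "PO_A \<Delta> q0 \<phi> Obf Obs =
     (\<Sum>\<^sub>\<infinity>ob\<in>{ob \<in> Obs. preimg \<Delta> q0 Obf ob \<subseteq> \<phi>}. Prob \<Delta> q0 (preimg \<Delta> q0 Obf ob))"

definition PO_S :: "('a, 's) fpfa_trans \<Rightarrow> 's \<Rightarrow> ('a \<times> 's) list set \<Rightarrow>
    (('a \<times> 's) list \<Rightarrow> 'o) \<Rightarrow> 'o set \<Rightarrow> real" where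
  "PO_S \<Delta> q0 \<phi> Obf Obs = PO_A \<Delta> q0 \<phi> Obf Obs + PO_A \<Delta> q0 (CRun \<Delta> q0 - \<phi>) Obf Obs"

record ('a, 's) nfa =
  trans :: "('s \<times> 'a \<times> 's) set"
  init :: 's
  final :: "'s set"

fun nfa_run :: "('a, 's) nfa \<Rightarrow> 's \<Rightarrow> ('a \<times> 's) list \<Rightarrow> bool" where
  "nfa_run N q [] = True"
| "nfa_run N q ((a, r) # \<rho>) = ((q, a, r) \<in> trans N \<and> nfa_run N r \<rho>)"

definition acc_runs :: "('a, 's) nfa \<Rightarrow> ('a \<times> 's) list set" where
  "acc_runs N = {\<rho>. nfa_run N (init N) \<rho> \<and> last_st (init N) \<rho> \<in> final N}"

definition unProb :: "('a, 's) fpfa_trans \<Rightarrow> 's \<Rightarrow> ('a, 's) nfa" where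
  "unProb \<Delta> q0 = \<lparr>trans = {(q, a, r). pmf (\<Delta> q) (Some (a, r)) > 0}, init = q0,
                   final = {q. pmf (\<Delta> q) None > 0}\<rparr>"

text \<open>unProb(Obf)(rho) = Obf(rho stop); since a complete run rho stop is represented by
the same list as rho, this is Obf itself.\<close>
definition unProb_obs :: "(('a \<times> 's) list \<Rightarrow> 'o) \<Rightarrow> ('a \<times> 's) list \<Rightarrow> 'o" where
  "unProb_obs Obf = (\<lambda>\<rho>. Obf \<rho>)"

definition opaque :: "('a, 's) nfa \<Rightarrow> ('a \<times> 's) list set \<Rightarrow> (('a \<times> 's) list \<Rightarrow> 'o) \<Rightarrow> 'o set \<Rightarrow> bool" where
  "opaque N \<phi> Obf Obs \<longleftrightarrow> (\<forall>ob\<in>Obs. \<not> {\<rho> \<in> acc_runs N. Obf \<rho> = ob} \<subseteq> \<phi>)"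

definition sym_opaque :: "('a, 's) nfa \<Rightarrow> ('a \<times> 's) list set \<Rightarrow> (('a \<times> 's) list \<Rightarrow> 'o) \<Rightarrow> 'o set \<Rightarrow> bool" where
  "sym_opaque N \<phi> Obf Obs \<longleftrightarrow> opaque N \<phi> Obf Obs \<and>
     (\<forall>ob\<in>Obs. \<not> {\<rho> \<in> acc_runs N. Obf \<rho> = ob} \<subseteq> acc_runs N - \<phi>)"

definition cond_entropy :: "('r set \<Rightarrow> real) \<Rightarrow> 'r set \<Rightarrow> ('r \<Rightarrow> 'x) \<Rightarrow> ('r \<Rightarrow> 'y) \<Rightarrow> real" where
  "cond_entropy P \<Omega> X Y =
     infsum (\<lambda>(x, y). let j = P {\<omega> \<in> \<Omega>. X \<omega> = x \<and> Y \<omega> = y}; m = P {\<omega> \<in> \<Omega>. Y \<omega> = y}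
                      in if j = 0 then 0 else - j * log 2 (j / m))
            (X ` \<Omega> \<times> Y ` \<Omega>)"

end

theory Submission
  imports Defs
begin

text \<open>Summing \<open>P(O = o)\<close> over the observations whose class \<open>O\<^sup>-\<^sup>1(o)\<close> lies in \<open>\<phi>\<close> gives the
probability of the set of complete runs whose observation class lies in \<open>\<phi>\<close>; likewise the
symmetric quantity is the probability of the runs whose class is pure, i.e. contained in \<open>\<phi>\<close> or
in its complement.  Every complete run has positive probability, and since from every state the
automaton stops within a fixed number of steps with probability bounded away from 0, the
complete runs carry total mass 1.  So a set of runs has probability 0 iff it contains no complete
run and probability 1 iff it contains all of them, which yields the bounds, the opacity
characterisations and the case \<open>\<phi> = CRun\<close>.  Finally \<open>H(1\<^sub>\<phi> | O)\<close> is a sum of nonnegative terms,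
the term for \<open>(x, o)\<close> vanishing iff the class of \<open>o\<close> is pure, so it is 0 iff every class is pure.\<close>

lemma run_prob_nonneg: "0 \<le> run_prob \<Delta> q \<rho>"
  by (induction \<Delta> q \<rho> rule: run_prob.induct) simp_all

lemma run_prob_pos_iff: "0 < run_prob \<Delta> q \<rho> \<longleftrightarrow> \<rho> \<in> CRun \<Delta> q"
proof (induction \<Delta> q \<rho> rule: run_prob.induct)
  case (1 \<Delta> q)
  then show ?case by (simp add: CRun_def is_final_def)
next
  case (2 \<Delta> q a r \<rho>)
  then show ?case
    using run_prob_nonneg[of \<Delta> r \<rho>] by (simp add: CRun_def zero_less_mult_iff)
qed

lemma run_prob_eq_0: "\<rho> \<notin> CRun \<Delta> q \<Longrightarrow> run_prob \<Delta> q \<rho> = 0"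
  using run_prob_pos_iff[of \<Delta> q \<rho>] run_prob_nonneg[of \<Delta> q \<rho>] by linarith

lemma pmf_None_plus_Some:
  fixes p :: "'a::finite option pmf"
  shows "pmf p None + (\<Sum>x\<in>UNIV. pmf p (Some x)) = 1"
proof -
  have "(\<Sum>x\<in>UNIV. pmf p x) = 1" by (rule sum_pmf_eq_1) auto
  then show ?thesis
    by (simp add: UNIV_option_conv sum.reindex)
qed

fun survival_prob :: "('a::finite, 's::finite) fpfa_trans \<Rightarrow> nat \<Rightarrow> 's \<Rightarrow> real" where
  "survival_prob \<Delta> 0 q = 1"
| "survival_prob \<Delta> (Suc n) q = (\<Sum>x\<in>UNIV. pmf (\<Delta> q) (Some x) * survival_prob \<Delta> n (snd x))"

lemma survival_prob_nonneg: "0 \<le> survival_prob \<Delta> n q"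
  by (induction n arbitrary: q) (auto intro!: sum_nonneg)

lemma lists_shorter_Suc:
  "{xs :: 'b list. length xs < Suc n} = insert [] ((\<lambda>(x, xs). x # xs) ` (UNIV \<times> {xs. length xs < n}))"
proof (intro set_eqI)
  show "xs \<in> {xs. length xs < Suc n} \<longleftrightarrow>
      xs \<in> insert [] ((\<lambda>(x, xs). x # xs) ` (UNIV \<times> {xs. length xs < n}))" for xs :: "'b list"
    by (cases xs) (auto simp: image_iff)
qed

lemma finite_lists_shorter: "finite {xs :: 'b::finite list. length xs < n}"
proof (rule finite_subset)
  show "{xs :: 'b list. length xs < n} \<subseteq> {xs. set xs \<subseteq> UNIV \<and> length xs \<le> n}" by auto
  show "finite {xs :: 'b list. set xs \<subseteq> UNIV \<and> length xs \<le> n}"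
    by (rule finite_lists_length_le) simp
qed

lemma sum_run_prob_shorter:
  fixes \<Delta> :: "('a::finite, 's::finite) fpfa_trans"
  shows "(\<Sum>\<rho> | length \<rho> < n. run_prob \<Delta> q \<rho>) = 1 - survival_prob \<Delta> n q"
proof (induction n arbitrary: q)
  case 0
  then show ?case by simp
next
  case (Suc n)
  have inj: "inj_on (\<lambda>(x, \<rho>). x # \<rho>) (UNIV \<times> {\<rho>. length \<rho> < n})"
    by (auto simp: inj_on_def)
  have "(\<Sum>\<rho> | length \<rho> < Suc n. run_prob \<Delta> q \<rho>)
      = run_prob \<Delta> q [] + (\<Sum>x\<in>UNIV. \<Sum>\<rho> | length \<rho> < n. run_prob \<Delta> q (x # \<rho>))"
    unfolding lists_shorter_Suc
    by (subst sum.insert) (auto simp: sum.reindex[OF inj] sum.cartesian_product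
        finite_lists_shorter intro!: sum.cong)
  also have "\<dots> = pmf (\<Delta> q) None + (\<Sum>x\<in>UNIV. pmf (\<Delta> q) (Some x) * (1 - survival_prob \<Delta> n (snd x)))"
    by (auto simp: Suc sum_distrib_left[symmetric] intro!: sum.cong)
  also have "\<dots> = 1 - survival_prob \<Delta> (Suc n) q"
    using pmf_None_plus_Some[of "\<Delta> q"] by (simp add: algebra_simps sum_subtractf)
  finally show ?case .
qed

lemma survival_prob_add_le:
  assumes "\<And>q. survival_prob \<Delta> N q \<le> c"
  shows "survival_prob \<Delta> (n + N) q \<le> c * survival_prob \<Delta> n q"
proof (induction n arbitrary: q)
  case 0
  then show ?case using assms by simp
next
  case (Suc n)
  have "survival_prob \<Delta> (Suc n + N) q
      = (\<Sum>x\<in>UNIV. pmf (\<Delta> q) (Some x) * survival_prob \<Delta> (n + N) (snd x))" by simp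
  also have "\<dots> \<le> (\<Sum>x\<in>UNIV. pmf (\<Delta> q) (Some x) * (c * survival_prob \<Delta> n (snd x)))"
    by (intro sum_mono mult_left_mono Suc) auto
  also have "\<dots> = c * survival_prob \<Delta> (Suc n) q"
    by (simp add: sum_distrib_left algebra_simps)
  finally show ?case .
qed

lemma survival_prob_mult_le_power:
  assumes "\<And>q. survival_prob \<Delta> N q \<le> c" and "0 \<le> c"
  shows "survival_prob \<Delta> (k * N) q \<le> c ^ k"
proof (induction k arbitrary: q)
  case 0
  then show ?case by simp
next
  case (Suc k)
  have "survival_prob \<Delta> (Suc k * N) q = survival_prob \<Delta> (k * N + N) q"
    by (simp add: add.commute)
  also have "\<dots> \<le> c * survival_prob \<Delta> (k * N) q"
    by (rule survival_prob_add_le[OF assms(1)])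
  also have "\<dots> \<le> c * c ^ k"
    using Suc assms(2) by (intro mult_left_mono) auto
  finally show ?case by simp
qed

text \<open>Every state has a complete run; the least probability \<open>\<epsilon>\<close> among these runs bounds the
probability of stopping within \<open>N\<close> steps from below, uniformly in the start state.\<close>
lemma fpfa_survival_prob_contracts:
  fixes \<Delta> :: "('a::finite, 's::finite) fpfa_trans"
  assumes "fpfa \<Delta>"
  obtains N c where "0 \<le> c" and "c < 1" and "\<And>q. survival_prob \<Delta> N q \<le> c"
proof -
  have "\<forall>q. \<exists>\<rho>. \<rho> \<in> CRun \<Delta> q"
    using assms by (simp add: fpfa_def CRun_def)
  then obtain \<rho> where \<rho>: "\<And>q. \<rho> q \<in> CRun \<Delta> q"
    by metis
  define N where "N = Suc (Max (range (\<lambda>q. length (\<rho> q))))"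
  define \<epsilon> where "\<epsilon> = Min (range (\<lambda>q. run_prob \<Delta> q (\<rho> q)))"
  have \<epsilon>_pos: "0 < \<epsilon>"
    unfolding \<epsilon>_def using \<rho> by (subst Min_gr_iff) (auto simp: run_prob_pos_iff)
  have bound: "survival_prob \<Delta> N q \<le> 1 - \<epsilon>" for q
  proof -
    have "\<epsilon> \<le> run_prob \<Delta> q (\<rho> q)"
      unfolding \<epsilon>_def by (rule Min_le) auto
    also have "\<dots> \<le> (\<Sum>\<rho>' | length \<rho>' < N. run_prob \<Delta> q \<rho>')"
      by (intro member_le_sum) (auto simp: N_def le_imp_less_Suc run_prob_nonneg finite_lists_shorter)
    finally show ?thesis
      by (simp add: sum_run_prob_shorter)
  qed
  have "0 \<le> 1 - \<epsilon>"
    using bound[of undefined] survival_prob_nonneg[of \<Delta> N undefined] by linarith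
  with bound \<epsilon>_pos show thesis
    by (intro that[of "1 - \<epsilon>" N]) auto
qed

lemma sum_run_prob_le_1:
  fixes \<Delta> :: "('a::finite, 's::finite) fpfa_trans"
  assumes "finite F"
  shows "sum (run_prob \<Delta> q) F \<le> 1"
proof -
  define n where "n = Suc (Max (length ` F))"
  have "F \<subseteq> {\<rho>. length \<rho> < n}"
    using assms by (auto simp: n_def le_imp_less_Suc)
  then have "sum (run_prob \<Delta> q) F \<le> (\<Sum>\<rho> | length \<rho> < n. run_prob \<Delta> q \<rho>)"
    by (intro sum_mono2 finite_lists_shorter) (auto simp: run_prob_nonneg)
  also have "\<dots> \<le> 1"
    using survival_prob_nonneg[of \<Delta> n q] by (simp add: sum_run_prob_shorter)
  finally show ?thesis .
qed

lemma run_prob_summable: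
  fixes \<Delta> :: "('a::finite, 's::finite) fpfa_trans"
  shows "run_prob \<Delta> q summable_on A"
proof -
  have "run_prob \<Delta> q summable_on UNIV"
    by (rule nonneg_bdd_above_summable_on)
      (auto simp: run_prob_nonneg bdd_above_def intro!: exI[of _ 1] sum_run_prob_le_1)
  then show ?thesis
    by (rule summable_on_subset) simp
qed

lemma Prob_eq_infsum: "Prob \<Delta> q S = infsum (run_prob \<Delta> q) S"
  unfolding Prob_def by (rule infsum_cong_neutral) (auto simp: run_prob_eq_0)

lemma Prob_nonneg: "0 \<le> Prob \<Delta> q S"
  unfolding Prob_def by (rule infsum_nonneg) (simp add: run_prob_nonneg)

lemma Prob_le_1:
  fixes \<Delta> :: "('a::finite, 's::finite) fpfa_trans"
  shows "Prob \<Delta> q S \<le> 1"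
  unfolding Prob_eq_infsum
  by (rule infsum_le_finite_sums) (auto simp: run_prob_summable sum_run_prob_le_1)

lemma Prob_UNIV:
  fixes \<Delta> :: "('a::finite, 's::finite) fpfa_trans"
  assumes "fpfa \<Delta>"
  shows "Prob \<Delta> q UNIV = 1"
proof -
  obtain N c where c: "0 \<le> c" "c < 1" and bound: "\<And>q. survival_prob \<Delta> N q \<le> c"
    using fpfa_survival_prob_contracts[OF assms] by metis
  have lower: "1 - c ^ k \<le> Prob \<Delta> q UNIV" for k
  proof -
    have "survival_prob \<Delta> (k * N) q \<le> c ^ k"
      by (rule survival_prob_mult_le_power[OF bound c(1)])
    then have "1 - c ^ k \<le> (\<Sum>\<rho> | length \<rho> < k * N. run_prob \<Delta> q \<rho>)"
      unfolding sum_run_prob_shorter by linarith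
    also have "\<dots> \<le> Prob \<Delta> q UNIV"
      unfolding Prob_eq_infsum
      by (rule finite_sum_le_infsum) (auto simp: run_prob_summable finite_lists_shorter run_prob_nonneg)
    finally show ?thesis .
  qed
  show ?thesis
  proof (rule ccontr)
    assume "Prob \<Delta> q UNIV \<noteq> 1"
    with Prob_le_1[of \<Delta> q UNIV] have "0 < 1 - Prob \<Delta> q UNIV" by linarith
    then obtain k where "c ^ k < 1 - Prob \<Delta> q UNIV"
      using real_arch_pow_inv[OF _ c(2)] by blast
    with lower[of k] show False by linarith
  qed
qed

lemma Prob_Un_disjoint:
  fixes \<Delta> :: "('a::finite, 's::finite) fpfa_trans"
  assumes "S \<inter> T = {}"
  shows "Prob \<Delta> q (S \<union> T) = Prob \<Delta> q S + Prob \<Delta> q T"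
  unfolding Prob_eq_infsum by (rule infsum_Un_disjoint) (auto simp: run_prob_summable assms)

lemma Prob_eq_0_iff:
  fixes \<Delta> :: "('a::finite, 's::finite) fpfa_trans"
  shows "Prob \<Delta> q S = 0 \<longleftrightarrow> S \<inter> CRun \<Delta> q = {}"
proof
  assume "Prob \<Delta> q S = 0"
  then have "run_prob \<Delta> q \<rho> = 0" if "\<rho> \<in> S \<inter> CRun \<Delta> q" for \<rho>
    using that unfolding Prob_def
    by (intro nonneg_infsum_le_0D[where A = "S \<inter> CRun \<Delta> q"]) (auto simp: run_prob_summable run_prob_nonneg)
  then show "S \<inter> CRun \<Delta> q = {}"
    using run_prob_pos_iff[of \<Delta> q] by (metis IntD2 equals0I less_irrefl)
qed (simp add: Prob_def)

lemma Prob_eq_1_iff: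
  fixes \<Delta> :: "('a::finite, 's::finite) fpfa_trans"
  assumes "fpfa \<Delta>"
  shows "Prob \<Delta> q S = 1 \<longleftrightarrow> CRun \<Delta> q \<subseteq> S"
proof -
  have "Prob \<Delta> q S + Prob \<Delta> q (- S) = 1"
    using Prob_Un_disjoint[of S "- S" \<Delta> q] Prob_UNIV[OF assms] by simp
  then have "Prob \<Delta> q S = 1 \<longleftrightarrow> Prob \<Delta> q (- S) = 0" by linarith
  also have "\<dots> \<longleftrightarrow> CRun \<Delta> q \<subseteq> S"
    by (auto simp: Prob_eq_0_iff)
  finally show ?thesis .
qed

lemma Prob_partition:
  fixes \<Delta> :: "('a::finite, 's::finite) fpfa_trans" and K :: "('a \<times> 's) list \<Rightarrow> 'k"
  shows "(\<lambda>k. Prob \<Delta> q {\<omega> \<in> CRun \<Delta> q. K \<omega> = k}) summable_on T"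
    and "(\<Sum>\<^sub>\<infinity>k\<in>T. Prob \<Delta> q {\<omega> \<in> CRun \<Delta> q. K \<omega> = k}) = Prob \<Delta> q {\<omega> \<in> CRun \<Delta> q. K \<omega> \<in> T}"
proof -
  let ?B = "\<lambda>k. {\<omega> \<in> CRun \<Delta> q. K \<omega> = k}"
  have inj: "inj_on snd (Sigma T ?B)"
    by (auto simp: inj_on_def)
  have image: "snd ` Sigma T ?B = {\<omega> \<in> CRun \<Delta> q. K \<omega> \<in> T}"
    by (auto simp: image_iff)
  have "(run_prob \<Delta> q \<circ> snd) summable_on Sigma T ?B"
    using summable_on_reindex[OF inj] run_prob_summable by blast
  then have summable: "(\<lambda>(k, \<omega>). run_prob \<Delta> q \<omega>) summable_on Sigma T ?B"
    by (simp add: comp_def case_prod_unfold)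
  show "(\<lambda>k. Prob \<Delta> q (?B k)) summable_on T"
    using summable_on_Sigma_banach[OF summable] by (simp add: Prob_eq_infsum)
  have "(\<Sum>\<^sub>\<infinity>k\<in>T. Prob \<Delta> q (?B k)) = (\<Sum>\<^sub>\<infinity>(k, \<omega>)\<in>Sigma T ?B. run_prob \<Delta> q \<omega>)"
    using infsum_Sigma'_banach[OF summable] by (simp add: Prob_eq_infsum)
  also have "\<dots> = Prob \<Delta> q {\<omega> \<in> CRun \<Delta> q. K \<omega> \<in> T}"
    using infsum_reindex[OF inj, of "run_prob \<Delta> q"] image
    by (simp add: Prob_eq_infsum comp_def case_prod_unfold)
  finally show "(\<Sum>\<^sub>\<infinity>k\<in>T. Prob \<Delta> q (?B k)) = Prob \<Delta> q {\<omega> \<in> CRun \<Delta> q. K \<omega> \<in> T}" .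
qed

lemma PO_A_eq_Prob:
  fixes \<Delta> :: "('a::finite, 's::finite) fpfa_trans"
  assumes "Obf ` CRun \<Delta> q = Obs"
  shows "PO_A \<Delta> q \<psi> Obf Obs
    = Prob \<Delta> q {\<rho> \<in> CRun \<Delta> q. preimg \<Delta> q Obf (Obf \<rho>) \<subseteq> \<psi>}"
proof -
  let ?T = "{ob \<in> Obs. preimg \<Delta> q Obf ob \<subseteq> \<psi>}"
  have "PO_A \<Delta> q \<psi> Obf Obs = Prob \<Delta> q {\<omega> \<in> CRun \<Delta> q. Obf \<omega> \<in> ?T}"
    unfolding PO_A_def preimg_def by (rule Prob_partition(2))
  also have "{\<omega> \<in> CRun \<Delta> q. Obf \<omega> \<in> ?T} = {\<rho> \<in> CRun \<Delta> q. preimg \<Delta> q Obf (Obf \<rho>) \<subseteq> \<psi>}"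
    using assms by blast
  finally show ?thesis .
qed

lemma PO_S_eq_Prob:
  fixes \<Delta> :: "('a::finite, 's::finite) fpfa_trans"
  assumes "Obf ` CRun \<Delta> q = Obs"
  shows "PO_S \<Delta> q \<phi> Obf Obs = Prob \<Delta> q {\<rho> \<in> CRun \<Delta> q.
      preimg \<Delta> q Obf (Obf \<rho>) \<subseteq> \<phi> \<or> preimg \<Delta> q Obf (Obf \<rho>) \<subseteq> CRun \<Delta> q - \<phi>}"
proof -
  let ?A = "{\<rho> \<in> CRun \<Delta> q. preimg \<Delta> q Obf (Obf \<rho>) \<subseteq> \<phi>}"
  let ?B = "{\<rho> \<in> CRun \<Delta> q. preimg \<Delta> q Obf (Obf \<rho>) \<subseteq> CRun \<Delta> q - \<phi>}"
  have "?A \<inter> ?B = {}"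
    by (auto simp: preimg_def)
  then have "PO_S \<Delta> q \<phi> Obf Obs = Prob \<Delta> q (?A \<union> ?B)"
    by (simp add: PO_S_def PO_A_eq_Prob[OF assms] Prob_Un_disjoint)
  also have "?A \<union> ?B = {\<rho> \<in> CRun \<Delta> q.
      preimg \<Delta> q Obf (Obf \<rho>) \<subseteq> \<phi> \<or> preimg \<Delta> q Obf (Obf \<rho>) \<subseteq> CRun \<Delta> q - \<phi>}"
    by blast
  finally show ?thesis .
qed

lemma nfa_run_unProb: "nfa_run (unProb \<Delta> q0) q \<rho> = is_run \<Delta> q \<rho>"
  by (induction \<rho> arbitrary: q) (auto simp: unProb_def)

lemma acc_runs_unProb: "acc_runs (unProb \<Delta> q) = CRun \<Delta> q"
  by (auto simp: acc_runs_def CRun_def nfa_run_unProb is_final_def) (auto simp: unProb_def)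

lemma opaque_unProb_iff:
  assumes "Obf ` CRun \<Delta> q = Obs"
  shows "opaque (unProb \<Delta> q) \<phi> (unProb_obs Obf) Obs
    \<longleftrightarrow> (\<forall>\<rho>\<in>CRun \<Delta> q. \<not> preimg \<Delta> q Obf (Obf \<rho>) \<subseteq> \<phi>)"
  by (auto simp: opaque_def acc_runs_unProb unProb_obs_def preimg_def assms[symmetric])

lemma sym_opaque_unProb_iff:
  assumes "Obf ` CRun \<Delta> q = Obs"
  shows "sym_opaque (unProb \<Delta> q) \<phi> (unProb_obs Obf) Obs
    \<longleftrightarrow> (\<forall>\<rho>\<in>CRun \<Delta> q. \<not> preimg \<Delta> q Obf (Obf \<rho>) \<subseteq> \<phi> \<and> \<not> preimg \<Delta> q Obf (Obf \<rho>) \<subseteq> CRun \<Delta> q - \<phi>)"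
  unfolding sym_opaque_def opaque_unProb_iff[OF assms]
  by (auto simp: acc_runs_unProb unProb_obs_def preimg_def assms[symmetric])

definition entropy_term :: "real \<Rightarrow> real \<Rightarrow> real" where
  "entropy_term j m = (if j = 0 then 0 else - j * log 2 (j / m))"

lemma entropy_term_nonneg:
  assumes "0 \<le> j" and "0 \<le> k"
  shows "0 \<le> entropy_term j (j + k)"
proof (cases "j = 0")
  case False
  with assms have "log 2 (j / (j + k)) \<le> 0"
    by simp
  with assms show ?thesis
    by (simp add: entropy_term_def mult_nonneg_nonpos)
qed (simp add: entropy_term_def)

lemma entropy_term_eq_0_iff:
  assumes "0 \<le> j" and "0 \<le> k"
  shows "entropy_term j (j + k) = 0 \<longleftrightarrow> j = 0 \<or> k = 0"
proof (cases "j = 0 \<or> k = 0")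
  case False
  with assms have "log 2 (j / (j + k)) < 0"
    by simp
  with False assms have "0 < entropy_term j (j + k)"
    by (simp add: entropy_term_def mult_pos_neg)
  with False show ?thesis by simp
qed (auto simp: entropy_term_def)

lemma entropy_term_le:
  assumes "0 \<le> j" and "0 \<le> k"
  shows "entropy_term j (j + k) \<le> k / ln 2"
proof (cases "j = 0")
  case False
  with assms have j: "0 < j" by simp
  have "entropy_term j (j + k) = j * ln ((j + k) / j) / ln 2"
    using j assms by (simp add: entropy_term_def log_def ln_div algebra_simps)
  also have "\<dots> \<le> j * ((j + k) / j - 1) / ln 2"
    using j assms by (intro divide_right_mono mult_left_mono ln_le_minus_one) auto
  also have "\<dots> = k / ln 2"
    using j by (simp add: field_simps)
  finally show ?thesis .
qed (use assms in \<open>simp add: entropy_term_def\<close>)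

lemma cond_entropy_indicator_eq_0_iff:
  fixes \<Delta> :: "('a::finite, 's::finite) fpfa_trans" and Obf :: "('a \<times> 's) list \<Rightarrow> 'o"
  shows "cond_entropy (Prob \<Delta> q) (CRun \<Delta> q) (indicator \<phi> :: ('a \<times> 's) list \<Rightarrow> real) Obf = 0
    \<longleftrightarrow> (\<forall>\<rho>\<in>CRun \<Delta> q. preimg \<Delta> q Obf (Obf \<rho>) \<subseteq> \<phi> \<or> preimg \<Delta> q Obf (Obf \<rho>) \<subseteq> CRun \<Delta> q - \<phi>)"
proof -
  let ?ind = "indicator \<phi> :: ('a \<times> 's) list \<Rightarrow> real"
  define J where "J x y = Prob \<Delta> q {\<omega> \<in> CRun \<Delta> q. ?ind \<omega> = x \<and> Obf \<omega> = y}" for x y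
  define I where "I = ?ind ` CRun \<Delta> q \<times> Obf ` CRun \<Delta> q"
  define g where "g = (\<lambda>(x, y). entropy_term (J x y) (J x y + J (1 - x) y))"
  have J_nonneg: "0 \<le> J x y" for x y
    by (simp add: J_def Prob_nonneg)
  have marginal: "Prob \<Delta> q {\<omega> \<in> CRun \<Delta> q. Obf \<omega> = y} = J x y + J (1 - x) y"
    if "x \<in> ?ind ` CRun \<Delta> q" for x y
  proof -
    from that have "x = 0 \<or> x = 1"
      by (auto simp: indicator_def)
    then have "{\<omega> \<in> CRun \<Delta> q. Obf \<omega> = y}
        = {\<omega> \<in> CRun \<Delta> q. ?ind \<omega> = x \<and> Obf \<omega> = y} \<union> {\<omega> \<in> CRun \<Delta> q. ?ind \<omega> = 1 - x \<and> Obf \<omega> = y}"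
      and "{\<omega> \<in> CRun \<Delta> q. ?ind \<omega> = x \<and> Obf \<omega> = y} \<inter> {\<omega> \<in> CRun \<Delta> q. ?ind \<omega> = 1 - x \<and> Obf \<omega> = y} = {}"
      by (auto simp: indicator_def)
    then show ?thesis
      unfolding J_def by (simp add: Prob_Un_disjoint)
  qed
  have entropy: "cond_entropy (Prob \<Delta> q) (CRun \<Delta> q) ?ind Obf = infsum g I"
    unfolding cond_entropy_def I_def
  proof (rule infsum_cong)
    fix k
    assume "k \<in> ?ind ` CRun \<Delta> q \<times> Obf ` CRun \<Delta> q"
    then obtain x y where k: "k = (x, y)" and x: "x \<in> ?ind ` CRun \<Delta> q"
      by auto
    show "(\<lambda>(x, y). let j = Prob \<Delta> q {\<omega> \<in> CRun \<Delta> q. ?ind \<omega> = x \<and> Obf \<omega> = y};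
          m = Prob \<Delta> q {\<omega> \<in> CRun \<Delta> q. Obf \<omega> = y} in if j = 0 then 0 else - j * log 2 (j / m)) k = g k"
      using marginal[OF x, of y] by (simp add: k g_def J_def entropy_term_def Let_def)
  qed
  have g_nonneg: "0 \<le> g k" for k
    by (auto simp: g_def J_nonneg entropy_term_nonneg split: prod.split)
  have "(\<lambda>k. Prob \<Delta> q {\<omega> \<in> CRun \<Delta> q. (1 - ?ind \<omega>, Obf \<omega>) = k} * (1 / ln 2)) summable_on I"
    by (intro summable_on_cmult_left Prob_partition(1))
  moreover have "g k \<le> Prob \<Delta> q {\<omega> \<in> CRun \<Delta> q. (1 - ?ind \<omega>, Obf \<omega>) = k} * (1 / ln 2)" for k
  proof -
    obtain x y where k: "k = (x, y)" by fastforce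
    have "g k \<le> J (1 - x) y / ln 2"
      by (simp add: k g_def J_nonneg entropy_term_le)
    also have "J (1 - x) y = Prob \<Delta> q {\<omega> \<in> CRun \<Delta> q. (1 - ?ind \<omega>, Obf \<omega>) = k}"
      unfolding J_def k by (rule arg_cong[where f = "Prob \<Delta> q"]) auto
    finally show ?thesis by simp
  qed
  ultimately have g_summable: "g summable_on I"
    using g_nonneg by (rule summable_on_comparison_test)
  have "infsum g I = 0 \<longleftrightarrow> (\<forall>k\<in>I. g k = 0)"
    using nonneg_infsum_le_0D[OF _ g_summable] g_nonneg infsum_0 by (metis order_refl)
  also have "\<dots> \<longleftrightarrow> (\<forall>x\<in>?ind ` CRun \<Delta> q. \<forall>y\<in>Obf ` CRun \<Delta> q. J x y = 0 \<or> J (1 - x) y = 0)"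
    by (simp add: I_def g_def entropy_term_eq_0_iff J_nonneg)
  also have "\<dots> \<longleftrightarrow> (\<forall>\<rho>\<in>CRun \<Delta> q. preimg \<Delta> q Obf (Obf \<rho>) \<subseteq> \<phi> \<or> preimg \<Delta> q Obf (Obf \<rho>) \<subseteq> CRun \<Delta> q - \<phi>)"
    unfolding J_def Prob_eq_0_iff by (auto simp: preimg_def indicator_def)
  finally show ?thesis
    unfolding entropy .
qed

theorem proposition1:
  fixes \<Delta> :: "('a::finite, 's::finite) fpfa_trans" and q0 :: 's
    and \<phi> :: "('a \<times> 's) list set" and Obf :: "('a \<times> 's) list \<Rightarrow> 'o" and Obs :: "'o set"
  assumes "fpfa \<Delta>"
    and "\<phi> \<subseteq> CRun \<Delta> q0"
    and "Obf ` CRun \<Delta> q0 = Obs"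
  shows "(0 \<le> PO_A \<Delta> q0 \<phi> Obf Obs \<and> PO_A \<Delta> q0 \<phi> Obf Obs \<le> 1 \<and>
          0 \<le> PO_S \<Delta> q0 \<phi> Obf Obs \<and> PO_S \<Delta> q0 \<phi> Obf Obs \<le> 1)
       \<and> (PO_A \<Delta> q0 \<phi> Obf Obs = 0 \<longleftrightarrow> opaque (unProb \<Delta> q0) \<phi> (unProb_obs Obf) Obs)
       \<and> (PO_S \<Delta> q0 \<phi> Obf Obs = 0 \<longleftrightarrow> sym_opaque (unProb \<Delta> q0) \<phi> (unProb_obs Obf) Obs)
       \<and> (PO_A \<Delta> q0 \<phi> Obf Obs = 1 \<longleftrightarrow> \<phi> = CRun \<Delta> q0)
       \<and> (PO_S \<Delta> q0 \<phi> Obf Obs = 1 \<longleftrightarrow>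
            cond_entropy (Prob \<Delta> q0) (CRun \<Delta> q0) (indicator \<phi> :: ('a \<times> 's) list \<Rightarrow> real) Obf = 0)"
proof -
  let ?A = "{\<rho> \<in> CRun \<Delta> q0. preimg \<Delta> q0 Obf (Obf \<rho>) \<subseteq> \<phi>}"
  let ?B = "{\<rho> \<in> CRun \<Delta> q0.
    preimg \<Delta> q0 Obf (Obf \<rho>) \<subseteq> \<phi> \<or> preimg \<Delta> q0 Obf (Obf \<rho>) \<subseteq> CRun \<Delta> q0 - \<phi>}"
  have PO_A: "PO_A \<Delta> q0 \<phi> Obf Obs = Prob \<Delta> q0 ?A"
    using assms(3) by (rule PO_A_eq_Prob)
  have PO_S: "PO_S \<Delta> q0 \<phi> Obf Obs = Prob \<Delta> q0 ?B"
    using assms(3) by (rule PO_S_eq_Prob)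
  have "0 \<le> PO_A \<Delta> q0 \<phi> Obf Obs \<and> PO_A \<Delta> q0 \<phi> Obf Obs \<le> 1 \<and>
      0 \<le> PO_S \<Delta> q0 \<phi> Obf Obs \<and> PO_S \<Delta> q0 \<phi> Obf Obs \<le> 1"
    unfolding PO_A PO_S by (simp add: Prob_nonneg Prob_le_1)
  moreover have "PO_A \<Delta> q0 \<phi> Obf Obs = 0 \<longleftrightarrow> opaque (unProb \<Delta> q0) \<phi> (unProb_obs Obf) Obs"
    unfolding PO_A Prob_eq_0_iff opaque_unProb_iff[OF assms(3)] by blast
  moreover have "PO_S \<Delta> q0 \<phi> Obf Obs = 0 \<longleftrightarrow> sym_opaque (unProb \<Delta> q0) \<phi> (unProb_obs Obf) Obs"
    unfolding PO_S Prob_eq_0_iff sym_opaque_unProb_iff[OF assms(3)] by blast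
  moreover have "PO_A \<Delta> q0 \<phi> Obf Obs = 1 \<longleftrightarrow> \<phi> = CRun \<Delta> q0"
    unfolding PO_A Prob_eq_1_iff[OF assms(1)] using assms(2) by (auto simp: preimg_def)
  moreover have "PO_S \<Delta> q0 \<phi> Obf Obs = 1 \<longleftrightarrow>
      cond_entropy (Prob \<Delta> q0) (CRun \<Delta> q0) (indicator \<phi> :: ('a \<times> 's) list \<Rightarrow> real) Obf = 0"
    unfolding PO_S Prob_eq_1_iff[OF assms(1)] cond_entropy_indicator_eq_0_iff by blast
  ultimately show ?thesis by blast
qed

end
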